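(* Let $h$ be odd and let $\psi$ be an additive character of $\mathbb{F}_{q^2}$ of conductor $q^2$. If $\nu$ is a character of $H'$ whose restriction to $H_0'$ is $\widetilde\psi$, then $\nu=\chi^\sharp$ for some $\chi\in\mathcal A_\psi$. Moreover, $$\mathrm{Ind}_{H_0'}^{H'}(\widetilde\psi)\cong\bigoplus_{\chi\in\mathcal A_\psi}\chi^\sharp.$$
   Context: Let $p$ be a prime, $q$ a power of $p$, $\ell\ne p$, and $h\ge3$ an odd integer. For a commutative $\mathbb{F}_q$-algebra $A$, $U_h^{2,q}(A)$ is the set of formal expressions $1+\sum_{i=1}^{2(h-1)}a_i\tau^i$ ($a_i\in A$) with multiplication obtained by extending $(a\tau^i)(b\tau^j)=ab^{q^i}\tau^{i+j}$ bi-additively, $\tau^0=1$, $\tau^k=0$ for $k>2(h-1)$. In $\mathcal U=U_h^{2,q}(\mathbb{F}_{q^2})$ let $H_0'=\{1+\sum a_i\tau^i: a_i=0\text{ unless } i=2(h-1)\text{ or } i\text{ is odd with } i>h-1\}$ and $H'=\{1+\sum a_i\tau^i: a_i=0\text{ for all odd } i\le h-1\}$. Let $L=\mathbb{F}_{q^2}((\pi))$ and $U_L^i=1+\pi^i\mathbb{F}_{q^2}[[\pi]]$. An additive character $\psi\colon\mathbb{F}_{q^2}\to\overline{\mathbb{Q}}_\ell^\times$ has conductor $q^2$ if there exists $x$ with $\psi(x^q)\ne\psi(x)$; $\widetilde\psi(1+\sum a_i\tau^i)=\psi(a_{2(h-1)})$ on $H_0'$. $\mathcal A_\psi$ is the set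 of characters $\chi$ of $U_L^1/U_L^h$ with $\chi(1+a\pi^{h-1})=\psi(a)$ for all $a\in\mathbb{F}_{q^2}$. For $\chi\in\mathcal A_\psi$, $\chi^\sharp$ is the character of $H'$ given by $\chi^\sharp(1+\sum a_i\tau^i)=\chi(1+a_2\pi+a_4\pi^2+\cdots+a_{2(h-1)}\pi^{h-1})$. *)

theory Defs
  imports Complex_Main "HOL-Algebra.Group" "HOL-Computational_Algebra.Primes"
begin

text \<open>Elements of U_h^{2,q}(F): the element 1 + sum a_i tau^i (1 <= i <= 2(h-1)) is
  represented by its coefficient function a, with a i = 0 for i = 0 and i > 2(h-1).\<close>

definition U_carrier :: "nat \<Rightarrow> (nat \<Rightarrow> 'a::field) set" where
  "U_carrier h = {a. \<forall>i. (i = 0 \<or> 2*(h-1) < i) \<longrightarrow> a i = 0}"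

text \<open>(a tau^i)(b tau^j) = a b^(q^i) tau^(i+j), extended bi-additively, truncated.\<close>
definition U_mult :: "nat \<Rightarrow> nat \<Rightarrow> (nat \<Rightarrow> 'a::field) \<Rightarrow> (nat \<Rightarrow> 'a) \<Rightarrow> (nat \<Rightarrow> 'a)" where
  "U_mult h q a b = (\<lambda>k. if 1 \<le> k \<and> k \<le> 2*(h-1)
       then a k + b k + (\<Sum>i\<in>{1..<k}. a i * (b (k-i)) ^ (q ^ i)) else 0)"

definition U_grp :: "nat \<Rightarrow> nat \<Rightarrow> (nat \<Rightarrow> 'a::field) monoid" where
  "U_grp h q = \<lparr>carrier = U_carrier h, monoid.mult = U_mult h q, one = (\<lambda>_. 0)\<rparr>"

definition H0'_carrier :: "nat \<Rightarrow> (nat \<Rightarrow> 'a::field) set" where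
  "H0'_carrier h = {a \<in> U_carrier h. \<forall>i. a i \<noteq> 0 \<longrightarrow> (i = 2*(h-1) \<or> (odd i \<and> h-1 < i))}"

definition H'_carrier :: "nat \<Rightarrow> (nat \<Rightarrow> 'a::field) set" where
  "H'_carrier h = {a \<in> U_carrier h. \<forall>i. odd i \<and> i \<le> h-1 \<longrightarrow> a i = 0}"

definition H0'_grp :: "nat \<Rightarrow> nat \<Rightarrow> (nat \<Rightarrow> 'a::field) monoid" where
  "H0'_grp h q = (U_grp h q)\<lparr>carrier := H0'_carrier h\<rparr>"

definition H'_grp :: "nat \<Rightarrow> nat \<Rightarrow> (nat \<Rightarrow> 'a::field) monoid" where
  "H'_grp h q = (U_grp h q)\<lparr>carrier := H'_carrier h\<rparr>"

text \<open>U_L^1/U_L^h: the class of 1 + c_1 pi + ... + c_(h-1) pi^(h-1) is represented by c,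
  with c i = 0 for i = 0 and i >= h; multiplication is power series multiplication mod pi^h.\<close>
definition UL_carrier :: "nat \<Rightarrow> (nat \<Rightarrow> 'a::field) set" where
  "UL_carrier h = {c. \<forall>i. (i = 0 \<or> h \<le> i) \<longrightarrow> c i = 0}"

definition UL_mult :: "nat \<Rightarrow> (nat \<Rightarrow> 'a::field) \<Rightarrow> (nat \<Rightarrow> 'a) \<Rightarrow> (nat \<Rightarrow> 'a)" where
  "UL_mult h c d = (\<lambda>k. if 1 \<le> k \<and> k < h
       then c k + d k + (\<Sum>i\<in>{1..<k}. c i * d (k-i)) else 0)"

definition UL_grp :: "nat \<Rightarrow> (nat \<Rightarrow> 'a::field) monoid" where
  "UL_grp h = \<lparr>carrier = UL_carrier h, monoid.mult = UL_mult h, one = (\<lambda>_. 0)\<rparr>"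

definition is_character :: "('g, 'm) monoid_scheme \<Rightarrow> ('g \<Rightarrow> complex) \<Rightarrow> bool" where
  "is_character G \<chi> \<longleftrightarrow> (\<forall>x\<in>carrier G. \<chi> x \<noteq> 0)
     \<and> (\<forall>x\<in>carrier G. \<forall>y\<in>carrier G. \<chi> (x \<otimes>\<^bsub>G\<^esub> y) = \<chi> x * \<chi> y)
     \<and> (\<forall>x. x \<notin> carrier G \<longrightarrow> \<chi> x = 0)"

definition additive_character :: "('a::field \<Rightarrow> complex) \<Rightarrow> bool" where
  "additive_character \<psi> \<longleftrightarrow> (\<forall>x. \<psi> x \<noteq> 0) \<and> (\<forall>x y. \<psi> (x + y) = \<psi> x * \<psi> y)"

definition has_conductor_q2 :: "nat \<Rightarrow> ('a::field \<Rightarrow> complex) \<Rightarrow> bool" where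
  "has_conductor_q2 q \<psi> \<longleftrightarrow> (\<exists>x. \<psi> (x ^ q) \<noteq> \<psi> x)"

definition psi_tilde :: "nat \<Rightarrow> ('a::field \<Rightarrow> complex) \<Rightarrow> (nat \<Rightarrow> 'a) \<Rightarrow> complex" where
  "psi_tilde h \<psi> a = (if a \<in> H0'_carrier h then \<psi> (a (2*(h-1))) else 0)"

definition A_psi :: "nat \<Rightarrow> ('a::field \<Rightarrow> complex) \<Rightarrow> ((nat \<Rightarrow> 'a) \<Rightarrow> complex) set" where
  "A_psi h \<psi> = {\<chi>. is_character (UL_grp h) \<chi> \<and>
      (\<forall>a. \<chi> (\<lambda>i. if i = h-1 then a else 0) = \<psi> a)}"

definition sharp :: "nat \<Rightarrow> ((nat \<Rightarrow> 'a::field) \<Rightarrow> complex) \<Rightarrow> (nat \<Rightarrow> 'a) \<Rightarrow> complex" where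
  "sharp h \<chi> a = (if a \<in> H'_carrier h
      then \<chi> (\<lambda>i. if 1 \<le> i \<and> i \<le> h-1 then a (2*i) else 0) else 0)"

text \<open>Character of the induced representation Ind_H^G f (Frobenius formula).\<close>
definition ind_char :: "('g, 'm) monoid_scheme \<Rightarrow> 'g set \<Rightarrow> ('g \<Rightarrow> complex) \<Rightarrow> 'g \<Rightarrow> complex" where
  "ind_char G H f g = (1 / of_nat (card H)) *
     (\<Sum>x\<in>carrier G. if x \<otimes>\<^bsub>G\<^esub> g \<otimes>\<^bsub>G\<^esub> inv\<^bsub>G\<^esub> x \<in> H
                      then f (x \<otimes>\<^bsub>G\<^esub> g \<otimes>\<^bsub>G\<^esub> inv\<^bsub>G\<^esub> x) else 0)"

end

theory Submission
  imports Defs "HOL-Algebra.Multiplicative_Group" "HOL-Number_Theory.Residues"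
begin

text \<open>On the field with \<open>q\<^sup>2\<close> elements \<open>x ^ q ^ 2 = x\<close>, so the even-indexed
  coefficients \<open>a\<^sub>2, a\<^sub>4, \<dots>\<close> of an element of \<open>H'\<close> define a homomorphism \<open>\<pi>\<close> onto
  the abelian group \<open>K = U\<^sub>L\<^sup>1/U\<^sub>L\<^sup>h\<close>, and it has a set-theoretic section. Then \<open>H\<^sub>0'\<close> is
  the preimage of \<open>S = U\<^sub>L\<^sup>h\<^sup>-\<^sup>1/U\<^sub>L\<^sup>h\<close>, the character \<open>psi_tilde\<close> is the pullback of the
  character \<open>\<phi> : 1 + a \<pi>\<^sup>h\<^sup>-\<^sup>1 \<mapsto> \<psi> a\<close> of \<open>S\<close>, \<open>A\<^sub>\<psi>\<close> is the set of extensions of \<open>\<phi>\<close>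
  to \<open>K\<close>, and \<open>\<chi>\<^sup>\<sharp> = \<chi> \<circ> \<pi>\<close>.
  A character of \<open>H'\<close> extending \<open>psi_tilde\<close> is trivial on \<open>ker \<pi> \<subseteq> H\<^sub>0'\<close>, hence factors
  through \<open>\<pi>\<close>. Conjugation does not change \<open>\<pi>\<close>, so the induced character at \<open>g\<close> is
  \<open>[K : S] \<phi> (\<pi> g)\<close> with \<open>\<phi> = 0\<close> off \<open>S\<close>; in the finite abelian group \<open>K\<close> the character
  \<open>\<phi>\<close> has exactly \<open>[K : S]\<close> extensions, and their sum vanishes off \<open>S\<close>, so this is
  \<open>\<Sum> \<chi> (\<pi> g)\<close> over \<open>\<chi> \<in> A\<^sub>\<psi>\<close>.\<close>

section \<open>Truncated twisted multiplication\<close>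

definition trunc_seqs :: "nat \<Rightarrow> (nat \<Rightarrow> 'a::zero) set" where
  "trunc_seqs N = {a. \<forall>i. (i = 0 \<or> N < i) \<longrightarrow> a i = 0}"

text \<open>\<open>twisted_mult N \<sigma> a b\<close> is the coefficient sequence of
  \<open>(1 + \<Sum> a\<^sub>i \<tau>\<^sup>i)(1 + \<Sum> b\<^sub>j \<tau>\<^sup>j)\<close> modulo \<open>\<tau>\<^sup>N\<^sup>+\<^sup>1\<close>, where \<open>\<tau>\<^sup>i b = \<sigma> i b \<tau>\<^sup>i\<close>.\<close>
definition twisted_mult ::
    "nat \<Rightarrow> (nat \<Rightarrow> 'a \<Rightarrow> 'a) \<Rightarrow> (nat \<Rightarrow> 'a) \<Rightarrow> (nat \<Rightarrow> 'a) \<Rightarrow> nat \<Rightarrow> 'a::comm_ring_1" where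
  "twisted_mult N \<sigma> a b = (\<lambda>k. if 1 \<le> k \<and> k \<le> N
       then a k + b k + (\<Sum>i\<in>{1..<k}. a i * \<sigma> i (b (k - i))) else 0)"

definition with_one :: "(nat \<Rightarrow> 'a::one) \<Rightarrow> nat \<Rightarrow> 'a" where
  "with_one a k = (if k = 0 then 1 else a k)"

definition twisted_conv ::
    "(nat \<Rightarrow> 'a \<Rightarrow> 'a) \<Rightarrow> (nat \<Rightarrow> 'a) \<Rightarrow> (nat \<Rightarrow> 'a) \<Rightarrow> nat \<Rightarrow> 'a::comm_ring_1" where
  "twisted_conv \<sigma> A B k = (\<Sum>i\<le>k. A i * \<sigma> i (B (k - i)))"

lemma triangle_sum_reassoc:
  fixes F :: "nat \<Rightarrow> nat \<Rightarrow> nat \<Rightarrow> 'b::comm_monoid_add"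
  shows "(\<Sum>j=0..k. \<Sum>i=0..j. F i (j - i) (n - j)) = (\<Sum>j=0..k. \<Sum>i=0..k - j. F j i (n - j - i))"
  by (induct k) (simp_all add: Suc_diff_le sum.distrib add.assoc)

lemma finite_trunc_seqs: "finite (trunc_seqs N :: (nat \<Rightarrow> 'a::{zero,finite}) set)"
proof -
  have eq: "trunc_seqs N = {a::nat \<Rightarrow> 'a. \<forall>i. (i \<in> {1..N} \<longrightarrow> a i \<in> UNIV) \<and> (i \<notin> {1..N} \<longrightarrow> a i = 0)}"
    unfolding trunc_seqs_def by (auto simp: Suc_le_eq)
  show ?thesis
    unfolding eq by (intro finite_set_of_finite_funs) simp_all
qed

lemma zero_trunc_seqs [simp]: "(\<lambda>_. 0) \<in> trunc_seqs N"
  unfolding trunc_seqs_def by simp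

lemma twisted_mult_trunc_seqs: "twisted_mult N \<sigma> a b \<in> trunc_seqs N"
  unfolding twisted_mult_def trunc_seqs_def by auto

lemma twisted_mult_id_commute: "twisted_mult N (\<lambda>i x. x) a b = twisted_mult N (\<lambda>i x. x) b a"
proof
  fix k
  have "(\<Sum>i\<in>{1..<k}. a i * b (k - i)) = (\<Sum>i\<in>{1..<k}. b i * a (k - i))"
    by (rule sum.reindex_bij_witness[of _ "\<lambda>i. k - i" "\<lambda>i. k - i"]) (auto simp: mult.commute)
  then show "twisted_mult N (\<lambda>i x. x) a b k = twisted_mult N (\<lambda>i x. x) b a k"
    unfolding twisted_mult_def by (simp add: add.commute)
qed

locale endo_family =
  fixes \<sigma> :: "nat \<Rightarrow> 'a::comm_ring_1 \<Rightarrow> 'a"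
  assumes \<sigma>_add: "\<sigma> i (x + y) = \<sigma> i x + \<sigma> i y"
    and \<sigma>_mult: "\<sigma> i (x * y) = \<sigma> i x * \<sigma> i y"
    and \<sigma>_one: "\<sigma> i 1 = 1"
    and \<sigma>_comp: "\<sigma> i (\<sigma> j x) = \<sigma> (i + j) x"
    and \<sigma>_0: "\<sigma> 0 x = x"
begin

lemma \<sigma>_zero: "\<sigma> i 0 = 0"
  using \<sigma>_add[of i 0 0] by simp

lemma \<sigma>_sum: "\<sigma> i (sum g S) = (\<Sum>x\<in>S. \<sigma> i (g x))"
  by (induction S rule: infinite_finite_induct) (auto simp: \<sigma>_zero \<sigma>_add)

lemma twisted_conv_assoc:
  "twisted_conv \<sigma> (twisted_conv \<sigma> A B) D k = twisted_conv \<sigma> A (twisted_conv \<sigma> B D) k"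
proof -
  let ?F = "\<lambda>i m r. A i * \<sigma> i (B m) * \<sigma> (i + m) (D r)"
  have "(\<Sum>j=0..k. \<Sum>i=0..j. ?F i (j - i) (k - j)) = (\<Sum>j=0..k. \<Sum>i=0..k - j. ?F j i (k - j - i))"
    by (rule triangle_sum_reassoc)
  then show ?thesis
    unfolding twisted_conv_def
    by (simp add: atLeast0AtMost sum_distrib_left sum_distrib_right \<sigma>_sum \<sigma>_mult \<sigma>_comp mult.assoc)
qed

lemma with_one_twisted_mult:
  assumes "k \<le> N"
  shows "with_one (twisted_mult N \<sigma> a b) k = twisted_conv \<sigma> (with_one a) (with_one b) k"
proof (cases "k = 0")
  case False
  then have "{..k} = insert 0 (insert k {1..<k})" by auto
  then show ?thesis
    using False assms by (simp add: with_one_def twisted_conv_def twisted_mult_def \<sigma>_0 \<sigma>_one add_ac)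
qed (simp add: with_one_def twisted_conv_def \<sigma>_0)

lemma twisted_mult_assoc:
  "twisted_mult N \<sigma> (twisted_mult N \<sigma> a b) c = twisted_mult N \<sigma> a (twisted_mult N \<sigma> b c)"
proof
  fix k
  show "twisted_mult N \<sigma> (twisted_mult N \<sigma> a b) c k = twisted_mult N \<sigma> a (twisted_mult N \<sigma> b c) k"
  proof (cases "1 \<le> k \<and> k \<le> N")
    case True
    have with_one_conv: "with_one (twisted_mult N \<sigma> u v) j = twisted_conv \<sigma> (with_one u) (with_one v) j"
      if "j \<le> k" for u v j
      using that True by (intro with_one_twisted_mult) simp
    have conv_left: "twisted_conv \<sigma> (with_one (twisted_mult N \<sigma> a b)) (with_one c) k
        = twisted_conv \<sigma> (twisted_conv \<sigma> (with_one a) (with_one b)) (with_one c) k"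
      unfolding twisted_conv_def[of \<sigma> _ "with_one c"] by (intro sum.cong refl) (simp add: with_one_conv)
    have conv_right: "twisted_conv \<sigma> (with_one a) (with_one (twisted_mult N \<sigma> b c)) k
        = twisted_conv \<sigma> (with_one a) (twisted_conv \<sigma> (with_one b) (with_one c)) k"
      unfolding twisted_conv_def[of \<sigma> "with_one a"] by (intro sum.cong refl) (simp add: with_one_conv)
    have "twisted_mult N \<sigma> (twisted_mult N \<sigma> a b) c k
        = with_one (twisted_mult N \<sigma> (twisted_mult N \<sigma> a b) c) k"
      using True by (simp add: with_one_def)
    also have "\<dots> = twisted_conv \<sigma> (twisted_conv \<sigma> (with_one a) (with_one b)) (with_one c) k"
      using True conv_left by (simp add: with_one_twisted_mult)
    also have "\<dots> = twisted_conv \<sigma> (with_one a) (twisted_conv \<sigma> (with_one b) (with_one c)) k"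
      by (rule twisted_conv_assoc)
    also have "\<dots> = with_one (twisted_mult N \<sigma> a (twisted_mult N \<sigma> b c)) k"
      using True conv_right by (simp add: with_one_twisted_mult)
    also have "\<dots> = twisted_mult N \<sigma> a (twisted_mult N \<sigma> b c) k"
      using True by (simp add: with_one_def)
    finally show ?thesis .
  next
    case False
    then show ?thesis
      unfolding twisted_mult_def by (simp only: if_False)
  qed
qed

lemma twisted_mult_zero_left: "a \<in> trunc_seqs N \<Longrightarrow> twisted_mult N \<sigma> (\<lambda>_. 0) a = a"
  unfolding twisted_mult_def trunc_seqs_def by (auto simp: fun_eq_iff not_less_eq_eq)

lemma twisted_mult_left_cancel:
  assumes "y \<in> trunc_seqs N" "y' \<in> trunc_seqs N" "twisted_mult N \<sigma> y x = twisted_mult N \<sigma> y' x"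
  shows "y = y'"
proof
  fix k
  show "y k = y' k"
  proof (induction k rule: less_induct)
    case (less k)
    show ?case
    proof (cases "1 \<le> k \<and> k \<le> N")
      case True
      have "(\<Sum>i\<in>{1..<k}. y i * \<sigma> i (x (k - i))) = (\<Sum>i\<in>{1..<k}. y' i * \<sigma> i (x (k - i)))"
        using less by (intro sum.cong) auto
      then show ?thesis
        using True fun_cong[OF assms(3), of k] unfolding twisted_mult_def by simp
    qed (use assms(1,2) in \<open>auto simp: trunc_seqs_def Suc_le_eq\<close>)
  qed
qed

lemma group_twisted_mult:
  assumes "X \<subseteq> trunc_seqs N" "finite X" "(\<lambda>_. 0) \<in> X"
    and closed: "\<And>a b. a \<in> X \<Longrightarrow> b \<in> X \<Longrightarrow> twisted_mult N \<sigma> a b \<in> X"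
  shows "group \<lparr>carrier = X, monoid.mult = twisted_mult N \<sigma>, one = (\<lambda>_. 0)\<rparr>"
proof (rule groupI; simp)
  fix x assume x: "x \<in> X"
  then show "twisted_mult N \<sigma> (\<lambda>_. 0) x = x"
    using assms(1) twisted_mult_zero_left by auto
  \<comment> \<open>right multiplication by \<open>x\<close> is injective on the finite set \<open>X\<close>, hence hits \<open>0\<close>\<close>
  have "inj_on (\<lambda>y. twisted_mult N \<sigma> y x) X"
    using assms(1) twisted_mult_left_cancel by (meson inj_onI subsetD)
  then have "(\<lambda>y. twisted_mult N \<sigma> y x) ` X = X"
    using closed x by (intro endo_inj_surj[OF assms(2)]) auto
  then have "(\<lambda>_. 0) \<in> (\<lambda>y. twisted_mult N \<sigma> y x) ` X"
    using assms(3) by simp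
  then show "\<exists>y\<in>X. twisted_mult N \<sigma> y x = (\<lambda>_. 0)"
    by force
qed (use assms closed twisted_mult_assoc in auto)

end

lemma endo_family_id: "endo_family (\<lambda>i x. x)"
  by standard auto

section \<open>Frobenius on finite fields\<close>

lemma CHAR_eq_prime_of_card:
  assumes "prime p" "card (UNIV :: 'a::{field,finite} set) = p ^ n"
  shows "CHAR('a) = p"
proof -
  have "prime CHAR('a)"
    by (intro prime_CHAR_semidom finite_imp_CHAR_pos) simp
  moreover have "CHAR('a) dvd p ^ n"
    using CHAR_dvd_CARD[where 'a = 'a] assms(2) by simp
  ultimately show ?thesis
    using assms(1) by (metis prime_dvd_power primes_dvd_imp_eq)
qed

lemma endo_family_frobenius:
  assumes "q = CHAR('a::{field,finite}) ^ r"
  shows "endo_family (\<lambda>i (x::'a). x ^ q ^ i)"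
proof
  fix i and x y :: 'a
  have "prime CHAR('a)"
    by (intro prime_CHAR_semidom finite_imp_CHAR_pos) simp
  moreover have "q ^ i = CHAR('a) ^ (r * i)"
    using assms by (simp add: power_mult)
  ultimately show "(x + y) ^ q ^ i = x ^ q ^ i + y ^ q ^ i"
    by (rule freshmans_dream')
next
  fix i j and x :: 'a
  have "(x ^ q ^ j) ^ q ^ i = x ^ (q ^ i * q ^ j)"
    by (simp add: mult.commute flip: power_mult)
  then show "(x ^ q ^ j) ^ q ^ i = x ^ q ^ (i + j)"
    by (simp add: power_add)
qed (simp_all add: power_mult_distrib)

lemma field_power_card_eq_self:
  fixes x :: "'a::{field,finite}"
  shows "x ^ card (UNIV :: 'a set) = x"
proof (cases "x = 0")
  case False
  define M :: "'a monoid" where "M = \<lparr>carrier = - {0 :: 'a}, monoid.mult = (*), one = 1\<rparr>"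
  have M: "group M"
  proof (rule groupI)
    fix y assume "y \<in> carrier M"
    then show "\<exists>z\<in>carrier M. z \<otimes>\<^bsub>M\<^esub> y = \<one>\<^bsub>M\<^esub>"
      by (intro bexI[of _ "inverse y"]) (auto simp: M_def)
  qed (auto simp: M_def)
  have pow: "y [^]\<^bsub>M\<^esub> n = y ^ n" for y :: 'a and n :: nat
    by (induction n) (simp_all add: M_def)
  have "x ^ order M = x [^]\<^bsub>M\<^esub> order M"
    by (rule pow[symmetric])
  also have "\<dots> = 1"
    using group.pow_order_eq_1[OF M, of x] False by (simp add: M_def)
  finally have "x ^ order M = 1" .
  moreover have "card (UNIV :: 'a set) = Suc (order M)"
    unfolding M_def order_def using card_Suc_Diff1[of UNIV "0::'a"] by (simp add: Compl_eq_Diff_UNIV)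
  ultimately show ?thesis by simp
next
  case True
  have "0 < card (UNIV :: 'a set)"
    by (rule finite_UNIV_card_ge_0) simp
  with True show ?thesis
    by simp
qed

section \<open>Characters of finite abelian groups\<close>

definition char_extensions ::
    "('g, 'm) monoid_scheme \<Rightarrow> 'g set \<Rightarrow> ('g \<Rightarrow> complex) \<Rightarrow> ('g \<Rightarrow> complex) set" where
  "char_extensions G S \<phi> = {\<chi>. is_character G \<chi> \<and> (\<forall>s\<in>S. \<chi> s = \<phi> s)}"

lemma is_character_carrier_update:
  "is_character (G\<lparr>carrier := T\<rparr>) \<chi> \<longleftrightarrow> (\<forall>x\<in>T. \<chi> x \<noteq> 0)
     \<and> (\<forall>x\<in>T. \<forall>y\<in>T. \<chi> (x \<otimes>\<^bsub>G\<^esub> y) = \<chi> x * \<chi> y) \<and> (\<forall>x. x \<notin> T \<longrightarrow> \<chi> x = 0)"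
  unfolding is_character_def by simp

lemma is_character_eqI:
  assumes "is_character G \<chi>" "is_character G \<chi>'" "\<And>x. x \<in> carrier G \<Longrightarrow> \<chi> x = \<chi>' x"
  shows "\<chi> = \<chi>'"
proof
  fix x
  show "\<chi> x = \<chi>' x"
    using assms unfolding is_character_def by (cases "x \<in> carrier G") auto
qed

context group
begin

lemma character_one:
  assumes "is_character G \<chi>"
  shows "\<chi> \<one> = 1"
proof -
  have "\<chi> (\<one> \<otimes> \<one>) = \<chi> \<one> * \<chi> \<one>" "\<chi> \<one> \<noteq> 0"
    using assms unfolding is_character_def by blast+
  then show ?thesis by simp
qed

lemma character_pow:
  assumes "is_character G \<chi>" "x \<in> carrier G"
  shows "\<chi> (x [^] (n::nat)) = \<chi> x ^ n"
proof (induction n)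
  case (Suc n)
  have "\<chi> (x [^] n \<otimes> x) = \<chi> (x [^] n) * \<chi> x"
    using assms unfolding is_character_def by simp
  then show ?case by (simp add: Suc.IH)
qed (simp add: character_one[OF assms(1)])

lemma subgroup_character_pow:
  assumes "subgroup T G" "is_character (G\<lparr>carrier := T\<rparr>) \<chi>" "x \<in> T"
  shows "\<chi> (x [^] (n::nat)) = \<chi> x ^ n"
proof -
  interpret T: group "G\<lparr>carrier := T\<rparr>"
    using assms(1) by (rule subgroup.subgroup_is_group) (rule is_group)
  show ?thesis
    using T.character_pow[of \<chi> x n] assms nat_pow_consistent[of x n T] by simp
qed

lemma restrict_character:
  assumes "is_character G \<chi>" "subgroup T G"
  shows "is_character (G\<lparr>carrier := T\<rparr>) (\<lambda>x. if x \<in> T then \<chi> x else 0)"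
  using assms subgroup.subset[OF assms(2)] subgroup.m_closed[OF assms(2)]
  unfolding is_character_carrier_update is_character_def by (auto simp: subset_iff)

lemma finite_subgroupI:
  assumes "finite H" "H \<subseteq> carrier G" "H \<noteq> {}" "\<And>a b. a \<in> H \<Longrightarrow> b \<in> H \<Longrightarrow> a \<otimes> b \<in> H"
  shows "subgroup H G"
proof (rule subgroupI[OF assms(2,3) _ assms(4)])
  fix a assume a: "a \<in> H"
  then have aG: "a \<in> carrier G" using assms(2) by auto
  \<comment> \<open>left multiplication by \<open>a\<close> permutes the finite set \<open>H\<close>, so \<open>\<one>\<close> and then \<open>inv a\<close> lie in \<open>H\<close>\<close>
  have "inj_on (\<lambda>x. a \<otimes> x) H"
    using assms(2) aG by (intro inj_onI) (metis Units_eq Units_l_cancel subsetD)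
  then have perm: "(\<lambda>x. a \<otimes> x) ` H = H"
    using a assms(4) by (intro endo_inj_surj[OF assms(1)]) auto
  then obtain x where "x \<in> H" "a \<otimes> x = a" using a by (metis imageE)
  then have "\<one> \<in> H" using aG assms(2) by (metis l_cancel_one' subsetD)
  then obtain y where "y \<in> H" "a \<otimes> y = \<one>" using perm by (metis imageE)
  then show "inv a \<in> H" using aG assms(2) by (metis inv_comm inv_equality subsetD)
qed

lemma char_extensions_UN:
  assumes "subgroup T G" "S \<subseteq> T"
  shows "char_extensions G S \<phi>
    = (\<Union>\<phi>'\<in>char_extensions (G\<lparr>carrier := T\<rparr>) S \<phi>. char_extensions G T \<phi>')"
proof safe
  fix \<chi> assume \<chi>: "\<chi> \<in> char_extensions G S \<phi>"
  let ?\<phi>' = "\<lambda>x. if x \<in> T then \<chi> x else 0"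
  have "?\<phi>' \<in> char_extensions (G\<lparr>carrier := T\<rparr>) S \<phi>"
    using \<chi> assms restrict_character unfolding char_extensions_def by auto
  moreover have "\<chi> \<in> char_extensions G T ?\<phi>'"
    using \<chi> unfolding char_extensions_def by auto
  ultimately show "\<chi> \<in> (\<Union>\<phi>'\<in>char_extensions (G\<lparr>carrier := T\<rparr>) S \<phi>. char_extensions G T \<phi>')"
    by blast
qed (use assms in \<open>auto simp: char_extensions_def\<close>)

lemma char_extensions_disjoint:
  assumes "is_character (G\<lparr>carrier := T\<rparr>) \<phi>\<^sub>1" "is_character (G\<lparr>carrier := T\<rparr>) \<phi>\<^sub>2" "\<phi>\<^sub>1 \<noteq> \<phi>\<^sub>2"
  shows "char_extensions G T \<phi>\<^sub>1 \<inter> char_extensions G T \<phi>\<^sub>2 = {}"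
proof (rule ccontr)
  assume "char_extensions G T \<phi>\<^sub>1 \<inter> char_extensions G T \<phi>\<^sub>2 \<noteq> {}"
  then have "\<forall>x\<in>T. \<phi>\<^sub>1 x = \<phi>\<^sub>2 x"
    unfolding char_extensions_def by auto
  then have "\<phi>\<^sub>1 = \<phi>\<^sub>2"
    using assms(1,2) by (intro is_character_eqI[of "G\<lparr>carrier := T\<rparr>"]) auto
  with assms(3) show False by contradiction
qed

end

locale adjoin_element = comm_group G for G (structure) +
  fixes S and g
  assumes finite_carrier: "finite (carrier G)" and S_subgroup: "subgroup S G"
    and g_carrier: "g \<in> carrier G" and g_notin: "g \<notin> S"
begin

definition rel_order :: nat where
  "rel_order = (LEAST m. 0 < m \<and> g [^] m \<in> S)"

definition adjoined :: "'a set" where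
  "adjoined = {s \<otimes> g [^] k | s k. s \<in> S \<and> k < rel_order}"

lemma S_carrier: "S \<subseteq> carrier G"
  using S_subgroup subgroup.subset by blast

lemma rel_order_pos: "0 < rel_order" and pow_rel_order: "g [^] rel_order \<in> S"
proof -
  have "g [^] order G \<in> S" "0 < order G"
    using S_subgroup g_carrier finite_carrier
    by (simp_all add: pow_order_eq_1 subgroup.one_closed order_gt_0_iff_finite)
  then have "\<exists>m::nat. 0 < m \<and> g [^] m \<in> S" by blast
  from LeastI_ex[OF this] show "0 < rel_order" "g [^] rel_order \<in> S"
    unfolding rel_order_def by auto
qed

lemma pow_notin_below_rel_order: "0 < k \<Longrightarrow> k < rel_order \<Longrightarrow> g [^] k \<notin> S"
  using not_less_Least unfolding rel_order_def by blast

lemma rel_order_ge_2: "2 \<le> rel_order"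
proof -
  have "rel_order \<noteq> 1"
    using pow_rel_order g_notin g_carrier by auto
  then show ?thesis using rel_order_pos by linarith
qed

lemma adjoined_rep_unique_le:
  assumes "s \<in> S" "s' \<in> S" "k < rel_order" "k' < rel_order" "k \<le> k'"
    and eq: "s \<otimes> g [^] k = s' \<otimes> g [^] k'"
  shows "s = s' \<and> k = k'"
proof -
  define d where "d = k' - k"
  have sG: "s \<in> carrier G" and s'G: "s' \<in> carrier G" using assms S_carrier by auto
  have "g [^] k' = g [^] d \<otimes> g [^] k"
    using assms(5) g_carrier by (simp add: d_def nat_pow_mult)
  then have "s \<otimes> g [^] k = (s' \<otimes> g [^] d) \<otimes> g [^] k"
    using eq g_carrier s'G by (simp add: m_assoc)
  then have s: "s = s' \<otimes> g [^] d"
    using g_carrier sG s'G by (metis right_cancel m_closed nat_pow_closed)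
  then have "g [^] d = inv s' \<otimes> s"
    using g_carrier s'G by (simp add: m_assoc[symmetric])
  then have "g [^] d \<in> S"
    using S_subgroup assms(1,2) by (simp add: subgroup.m_closed subgroup.m_inv_closed)
  then have "d = 0"
    using pow_notin_below_rel_order[of d] assms unfolding d_def by linarith
  then show ?thesis
    using s s'G assms(5) unfolding d_def by simp
qed

lemma adjoined_rep_unique:
  assumes "s \<in> S" "s' \<in> S" "k < rel_order" "k' < rel_order" "s \<otimes> g [^] k = s' \<otimes> g [^] k'"
  shows "s = s' \<and> k = k'"
  using adjoined_rep_unique_le[of s s' k k'] adjoined_rep_unique_le[of s' s k' k] assms
  by (cases "k \<le> k'") auto

lemma adjoined_carrier: "adjoined \<subseteq> carrier G"
  unfolding adjoined_def using S_carrier g_carrier by auto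

lemma S_adjoined: "S \<subseteq> adjoined"
proof
  fix s assume "s \<in> S"
  then have "s = s \<otimes> g [^] (0::nat)" using S_carrier by auto
  then show "s \<in> adjoined"
    unfolding adjoined_def using \<open>s \<in> S\<close> rel_order_pos by blast
qed

lemma g_adjoined: "g \<in> adjoined"
proof -
  have "g = \<one> \<otimes> g [^] (1::nat) \<and> \<one> \<in> S \<and> 1 < rel_order"
    using g_carrier subgroup.one_closed[OF S_subgroup] rel_order_ge_2 by simp
  then show ?thesis
    unfolding adjoined_def by blast
qed

lemma adjoined_mult_rep:
  assumes "s \<in> S" "s' \<in> S" "k < rel_order" "k' < rel_order"
  shows "(s \<otimes> g [^] k) \<otimes> (s' \<otimes> g [^] k') =
    (if k + k' < rel_order then (s \<otimes> s') \<otimes> g [^] (k + k')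
     else (s \<otimes> s' \<otimes> g [^] rel_order) \<otimes> g [^] (k + k' - rel_order))"
proof -
  have sG: "s \<in> carrier G" and s'G: "s' \<in> carrier G" using assms S_carrier by auto
  have e: "(s \<otimes> g [^] k) \<otimes> (s' \<otimes> g [^] k') = (s \<otimes> s') \<otimes> g [^] (k + k')"
    using sG s'G g_carrier by (simp add: m_ac nat_pow_mult[symmetric])
  show ?thesis
  proof (cases "k + k' < rel_order")
    case False
    then have "g [^] (k + k') = g [^] rel_order \<otimes> g [^] (k + k' - rel_order)"
      using g_carrier by (simp add: nat_pow_mult)
    then show ?thesis using e False sG s'G g_carrier by (simp add: m_ac)
  qed (use e in simp)
qed

lemma adjoined_mult_closed: "a \<in> adjoined \<Longrightarrow> b \<in> adjoined \<Longrightarrow> a \<otimes> b \<in> adjoined"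
proof -
  assume "a \<in> adjoined" "b \<in> adjoined"
  then obtain s k s' k' where a: "a = s \<otimes> g [^] k" "s \<in> S" "k < rel_order"
    and b: "b = s' \<otimes> g [^] k'" "s' \<in> S" "k' < rel_order"
    unfolding adjoined_def by blast
  have "s \<otimes> s' \<in> S" "s \<otimes> s' \<otimes> g [^] rel_order \<in> S"
    using a b pow_rel_order S_subgroup by (auto intro: subgroup.m_closed)
  moreover have "k + k' - rel_order < rel_order" using a b by linarith
  ultimately show "a \<otimes> b \<in> adjoined"
    using adjoined_mult_rep[OF a(2) b(2) a(3) b(3)] a b unfolding adjoined_def by auto
qed

lemma subgroup_adjoined: "subgroup adjoined G"
  by (rule finite_subgroupI)
     (use adjoined_carrier finite_carrier finite_subset g_adjoined adjoined_mult_closed in auto)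

lemma pow_g_adjoined: "g [^] (k::nat) \<in> adjoined"
  by (induction k) (simp_all add: subgroup.one_closed[OF subgroup_adjoined] adjoined_mult_closed g_adjoined)

lemma card_adjoined: "card adjoined = rel_order * card S"
proof -
  have "adjoined = (\<lambda>(s, k). s \<otimes> g [^] k) ` (S \<times> {..<rel_order})"
    unfolding adjoined_def by auto
  moreover have "inj_on (\<lambda>(s, k). s \<otimes> g [^] k) (S \<times> {..<rel_order})"
    unfolding inj_on_def using adjoined_rep_unique by auto
  ultimately show ?thesis
    by (simp add: card_image card_cartesian_product)
qed

context
  fixes \<phi> assumes \<phi>: "is_character (G\<lparr>carrier := S\<rparr>) \<phi>"
begin

definition extension :: "complex \<Rightarrow> 'a \<Rightarrow> complex" where
  "extension z t = (if t \<in> adjoined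
     then (THE c. \<exists>s k. s \<in> S \<and> k < rel_order \<and> t = s \<otimes> g [^] k \<and> c = \<phi> s * z ^ k) else 0)"

lemma extension_eq:
  assumes "s \<in> S" "k < rel_order"
  shows "extension z (s \<otimes> g [^] k) = \<phi> s * z ^ k"
proof -
  have "s \<otimes> g [^] k \<in> adjoined"
    unfolding adjoined_def using assms by blast
  moreover have "(THE c. \<exists>s' k'. s' \<in> S \<and> k' < rel_order \<and> s \<otimes> g [^] k = s' \<otimes> g [^] k'
      \<and> c = \<phi> s' * z ^ k') = \<phi> s * z ^ k"
    by (rule the_equality) (use assms adjoined_rep_unique in blast)+
  ultimately show ?thesis
    unfolding extension_def by simp
qed

lemma extension_mult:
  assumes z: "z ^ rel_order = \<phi> (g [^] rel_order)" and ab: "a \<in> adjoined" "b \<in> adjoined"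
  shows "extension z (a \<otimes> b) = extension z a * extension z b"
proof -
  have \<phi>_mult: "\<phi> (x \<otimes> y) = \<phi> x * \<phi> y" if "x \<in> S" "y \<in> S" for x y
    using \<phi> that unfolding is_character_carrier_update by auto
  obtain s k s' k' where a: "a = s \<otimes> g [^] k" "s \<in> S" "k < rel_order"
    and b: "b = s' \<otimes> g [^] k'" "s' \<in> S" "k' < rel_order"
    using ab unfolding adjoined_def by blast
  have ss: "s \<otimes> s' \<in> S" "s \<otimes> s' \<otimes> g [^] rel_order \<in> S"
    using a b pow_rel_order S_subgroup by (auto intro: subgroup.m_closed)
  show ?thesis
  proof (cases "k + k' < rel_order")
    case True
    then show ?thesis
      using adjoined_mult_rep[OF a(2) b(2) a(3) b(3)] a b ss \<phi>_mult
      by (simp add: extension_eq power_add)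
  next
    case False
    then have "extension z (a \<otimes> b) = \<phi> (s \<otimes> s' \<otimes> g [^] rel_order) * z ^ (k + k' - rel_order)"
      using adjoined_mult_rep[OF a(2) b(2) a(3) b(3)] a b ss by (simp add: extension_eq)
    also have "\<dots> = \<phi> s * \<phi> s' * z ^ (rel_order + (k + k' - rel_order))"
      using \<phi>_mult ss a b pow_rel_order z by (simp add: power_add)
    also have "\<dots> = extension z a * extension z b"
      using a b False by (simp add: extension_eq power_add)
    finally show ?thesis .
  qed
qed

lemma extension_char_extension:
  assumes z: "z ^ rel_order = \<phi> (g [^] rel_order)"
  shows "extension z \<in> char_extensions (G\<lparr>carrier := adjoined\<rparr>) S \<phi>"
proof -
  have \<phi>_nonzero: "\<phi> x \<noteq> 0" if "x \<in> S" for x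
    using \<phi> that unfolding is_character_carrier_update by auto
  have "z \<noteq> 0"
    using z \<phi>_nonzero[OF pow_rel_order] rel_order_pos by (metis zero_power)
  have nonzero: "extension z t \<noteq> 0" if "t \<in> adjoined" for t
    using that \<open>z \<noteq> 0\<close> \<phi>_nonzero unfolding adjoined_def by (auto simp: extension_eq)
  have "extension z s = \<phi> s" if "s \<in> S" for s
    using extension_eq[OF that rel_order_pos, of z] that S_carrier by auto
  then show ?thesis
    unfolding char_extensions_def is_character_carrier_update
    using nonzero extension_mult[OF z] by (auto simp: extension_def)
qed

lemma extension_at_g: "extension z g = z"
proof -
  have "\<phi> \<one> = 1"
  proof -
    interpret S: group "G\<lparr>carrier := S\<rparr>"
      using S_subgroup by (rule subgroup.subgroup_is_group) (rule is_group)
    show ?thesis using S.character_one[OF \<phi>] by simp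
  qed
  then show ?thesis
    using extension_eq[OF subgroup.one_closed[OF S_subgroup], of 1 z] rel_order_ge_2 g_carrier by simp
qed

lemma char_extension_determined_at_g:
  assumes "\<chi> \<in> char_extensions (G\<lparr>carrier := adjoined\<rparr>) S \<phi>"
    and "\<chi>' \<in> char_extensions (G\<lparr>carrier := adjoined\<rparr>) S \<phi>" and "\<chi> g = \<chi>' g"
  shows "\<chi> = \<chi>'"
proof -
  have \<chi>: "is_character (G\<lparr>carrier := adjoined\<rparr>) \<chi>" "is_character (G\<lparr>carrier := adjoined\<rparr>) \<chi>'"
    using assms unfolding char_extensions_def by auto
  have ext_value: "\<xi> (s \<otimes> g [^] k) = \<phi> s * \<xi> g ^ k"
    if "\<xi> \<in> char_extensions (G\<lparr>carrier := adjoined\<rparr>) S \<phi>" "s \<in> S" for \<xi> s and k :: nat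
  proof -
    have "is_character (G\<lparr>carrier := adjoined\<rparr>) \<xi>" "\<xi> s = \<phi> s"
      using that unfolding char_extensions_def by auto
    moreover have "g [^] k \<in> adjoined"
      by (rule pow_g_adjoined)
    ultimately show ?thesis
      using that S_adjoined subgroup_character_pow[OF subgroup_adjoined _ g_adjoined]
      unfolding is_character_carrier_update by auto
  qed
  show ?thesis
  proof (rule is_character_eqI[OF \<chi>])
    fix t assume "t \<in> carrier (G\<lparr>carrier := adjoined\<rparr>)"
    then obtain s and k :: nat where "t = s \<otimes> g [^] k" "s \<in> S"
      unfolding adjoined_def by auto
    then show "\<chi> t = \<chi>' t"
      using ext_value[OF assms(1)] ext_value[OF assms(2)] assms(3) by simp
  qed
qed

lemma bij_char_extensions_roots:
  "bij_betw (\<lambda>\<chi>. \<chi> g) (char_extensions (G\<lparr>carrier := adjoined\<rparr>) S \<phi>)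
     {z. z ^ rel_order = \<phi> (g [^] rel_order)}"
  unfolding bij_betw_def
proof (intro conjI)
  show "inj_on (\<lambda>\<chi>. \<chi> g) (char_extensions (G\<lparr>carrier := adjoined\<rparr>) S \<phi>)"
    using char_extension_determined_at_g by (blast intro: inj_onI)
  show "(\<lambda>\<chi>. \<chi> g) ` char_extensions (G\<lparr>carrier := adjoined\<rparr>) S \<phi>
      = {z. z ^ rel_order = \<phi> (g [^] rel_order)}"
  proof safe
    fix \<chi> assume "\<chi> \<in> char_extensions (G\<lparr>carrier := adjoined\<rparr>) S \<phi>"
    then show "\<chi> g ^ rel_order = \<phi> (g [^] rel_order)"
      using subgroup_character_pow[OF subgroup_adjoined _ g_adjoined] pow_rel_order
      unfolding char_extensions_def by auto
  next
    fix z :: complex assume "z ^ rel_order = \<phi> (g [^] rel_order)"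
    then have "extension z \<in> char_extensions (G\<lparr>carrier := adjoined\<rparr>) S \<phi>"
      by (rule extension_char_extension)
    then show "z \<in> (\<lambda>\<chi>. \<chi> g) ` char_extensions (G\<lparr>carrier := adjoined\<rparr>) S \<phi>"
      by (rule rev_image_eqI) (simp add: extension_at_g)
  qed
qed

lemma card_char_extensions_adjoined:
  "finite (char_extensions (G\<lparr>carrier := adjoined\<rparr>) S \<phi>)
   \<and> card (char_extensions (G\<lparr>carrier := adjoined\<rparr>) S \<phi>) = rel_order"
proof -
  have "\<phi> (g [^] rel_order) \<noteq> 0"
    using \<phi> pow_rel_order unfolding is_character_carrier_update by blast
  then have roots: "finite {z. z ^ rel_order = \<phi> (g [^] rel_order)}"
    "card {z. z ^ rel_order = \<phi> (g [^] rel_order)} = rel_order"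
    using finite_nth_roots[OF rel_order_pos] card_nth_roots[OF _ rel_order_pos] by blast+
  note bij = bij_char_extensions_roots
  show ?thesis
  proof
    show "finite (char_extensions (G\<lparr>carrier := adjoined\<rparr>) S \<phi>)"
      using bij_betw_finite[OF bij] roots(1) by blast
    show "card (char_extensions (G\<lparr>carrier := adjoined\<rparr>) S \<phi>) = rel_order"
      using bij_betw_same_card[OF bij] roots(2) by (rule trans)
  qed
qed

end

end

context comm_group
begin

lemma char_extensions_carrier:
  assumes "is_character (G\<lparr>carrier := carrier G\<rparr>) \<phi>"
  shows "char_extensions G (carrier G) \<phi> = {\<phi>}"
proof -
  have \<phi>: "is_character G \<phi>"
    using assms unfolding is_character_def by simp
  have "\<chi> = \<phi>" if "\<chi> \<in> char_extensions G (carrier G) \<phi>" for \<chi>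
    using that \<phi> by (intro is_character_eqI) (auto simp: char_extensions_def)
  then show ?thesis
    using \<phi> unfolding char_extensions_def by blast
qed

lemma card_char_extensions:
  assumes "finite (carrier G)" "subgroup S G" "is_character (G\<lparr>carrier := S\<rparr>) \<phi>"
  shows "finite (char_extensions G S \<phi>) \<and> card (char_extensions G S \<phi>) * card S = order G"
  using assms(2,3)
proof (induction "order G - card S" arbitrary: S \<phi> rule: less_induct)
  case less
  show ?case
  proof (cases "S = carrier G")
    case True
    then show ?thesis
      using char_extensions_carrier less.prems(2) by (simp add: order_def)
  next
    case False
    then obtain g where g: "g \<in> carrier G" "g \<notin> S"
      using subgroup.subset[OF less.prems(1)] by blast
    \<comment> \<open>extend in two steps: in \<open>rel_order\<close> ways to \<open>adjoined\<close>, then by induction to \<open>G\<close>\<close>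
    interpret adj: adjoin_element G S g
      by (intro adjoin_element.intro adjoin_element_axioms.intro comm_group_axioms)
         (use assms(1) less.prems(1) g in auto)
    let ?T = adj.adjoined
    let ?E = "char_extensions (G\<lparr>carrier := ?T\<rparr>) S \<phi>"
    have E: "finite ?E" "card ?E = adj.rel_order"
      using adj.card_char_extensions_adjoined[OF less.prems(2)] by auto
    have "card S < card ?T"
      using adj.card_adjoined adj.rel_order_ge_2 subgroup.finite_imp_card_positive[OF less.prems(1) assms(1)]
      by simp
    moreover have "card ?T \<le> order G"
      unfolding order_def using adj.adjoined_carrier assms(1) by (rule card_mono[rotated])
    ultimately have "order G - card ?T < order G - card S" by linarith
    then have IH: "finite (char_extensions G ?T \<phi>') \<and> card (char_extensions G ?T \<phi>') * card ?T = order G"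
      if "\<phi>' \<in> ?E" for \<phi>'
      using less.hyps[OF _ adj.subgroup_adjoined] that unfolding char_extensions_def by blast
    have UN: "char_extensions G S \<phi> = (\<Union>\<phi>'\<in>?E. char_extensions G ?T \<phi>')"
      by (rule char_extensions_UN[OF adj.subgroup_adjoined adj.S_adjoined])
    have "card (char_extensions G S \<phi>) = (\<Sum>\<phi>'\<in>?E. card (char_extensions G ?T \<phi>'))"
      unfolding UN using E(1) IH char_extensions_disjoint unfolding char_extensions_def
      by (intro card_UN_disjoint) auto
    then have "card (char_extensions G S \<phi>) * card ?T = (\<Sum>\<phi>'\<in>?E. order G)"
      using IH by (simp add: sum_distrib_right)
    then have "adj.rel_order * (card (char_extensions G S \<phi>) * card S) = adj.rel_order * order G"
      using E(2) adj.card_adjoined by (simp add: mult_ac)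
    then show ?thesis
      using UN E(1) IH adj.rel_order_pos by simp
  qed
qed

lemma exists_character_separating:
  assumes "finite (carrier G)" "subgroup S G" "u \<in> carrier G" "u \<notin> S"
  shows "\<exists>\<eta>. is_character G \<eta> \<and> (\<forall>s\<in>S. \<eta> s = 1) \<and> \<eta> u \<noteq> 1"
proof -
  interpret adj: adjoin_element G S u
    by (intro adjoin_element.intro adjoin_element_axioms.intro comm_group_axioms) (use assms in auto)
  let ?one = "\<lambda>x. if x \<in> S then 1 else (0::complex)"
  have one: "is_character (G\<lparr>carrier := S\<rparr>) ?one"
    unfolding is_character_carrier_update using assms(2) by (auto intro: subgroup.m_closed)
  \<comment> \<open>there are \<open>rel_order \<ge> 2\<close> roots of unity of order dividing \<open>rel_order\<close>, so one of them is not \<open>1\<close>\<close>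
  have "card {z::complex. z ^ adj.rel_order = 1} = adj.rel_order"
    using adj.rel_order_pos by (simp add: card_nth_roots)
  moreover have "card {z::complex. z ^ adj.rel_order = 1} \<le> 1"
    if "{z::complex. z ^ adj.rel_order = 1} \<subseteq> {1}"
    using card_mono[OF _ that] by simp
  ultimately have "\<not> {z::complex. z ^ adj.rel_order = 1} \<subseteq> {1}"
    using adj.rel_order_ge_2 by linarith
  then obtain z :: complex where z: "z ^ adj.rel_order = ?one (u [^] adj.rel_order)" "z \<noteq> 1"
    using adj.pow_rel_order by auto
  have "z \<in> (\<lambda>\<chi>. \<chi> u) ` char_extensions (G\<lparr>carrier := adj.adjoined\<rparr>) S ?one"
    using adj.bij_char_extensions_roots[OF one] z(1) unfolding bij_betw_def by simp
  then obtain \<eta>' where \<eta>': "\<eta>' \<in> char_extensions (G\<lparr>carrier := adj.adjoined\<rparr>) S ?one" "\<eta>' u = z"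
    by auto
  have "finite (char_extensions G adj.adjoined \<eta>')
      \<and> card (char_extensions G adj.adjoined \<eta>') * card adj.adjoined = order G"
    using \<eta>'(1) card_char_extensions[OF assms(1) adj.subgroup_adjoined]
    unfolding char_extensions_def by blast
  moreover have "0 < order G"
    using assms(1) by (simp add: order_gt_0_iff_finite)
  ultimately have "char_extensions G adj.adjoined \<eta>' \<noteq> {}"
    by (metis card.empty mult_0 less_irrefl)
  then obtain \<eta> where "\<eta> \<in> char_extensions G adj.adjoined \<eta>'"
    by blast
  then show ?thesis
    using \<eta>' z(2) adj.S_adjoined adj.g_adjoined unfolding char_extensions_def by (auto intro!: exI[of _ \<eta>])
qed

lemma sum_char_extensions_notin:
  assumes "finite (carrier G)" "subgroup S G" "is_character (G\<lparr>carrier := S\<rparr>) \<phi>"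
    and "u \<in> carrier G" "u \<notin> S"
  shows "(\<Sum>\<chi>\<in>char_extensions G S \<phi>. \<chi> u) = 0"
proof -
  obtain \<eta> where \<eta>: "is_character G \<eta>" "\<forall>s\<in>S. \<eta> s = 1" "\<eta> u \<noteq> 1"
    using exists_character_separating[OF assms(1,2,4,5)] by blast
  define E where "E = char_extensions G S \<phi>"
  define twist where "twist \<chi> x = \<eta> x * \<chi> x" for \<chi> :: "'a \<Rightarrow> complex" and x
  \<comment> \<open>multiplication by \<open>\<eta>\<close> permutes the extensions of \<open>\<phi>\<close>, and multiplies the sum by \<open>\<eta> u \<noteq> 1\<close>\<close>
  have "finite E"
    using card_char_extensions[OF assms(1-3)] unfolding E_def by blast
  have twist_E: "twist ` E \<subseteq> E"
    using \<eta> unfolding E_def char_extensions_def twist_def is_character_def by auto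
  have "inj_on twist E"
  proof (rule inj_onI)
    fix \<chi> \<chi>' assume "\<chi> \<in> E" "\<chi>' \<in> E" and eq: "twist \<chi> = twist \<chi>'"
    show "\<chi> = \<chi>'"
    proof (rule is_character_eqI[of G])
      fix x assume x: "x \<in> carrier G"
      have "\<eta> x * \<chi> x = \<eta> x * \<chi>' x"
        using fun_cong[OF eq, of x] unfolding twist_def .
      then show "\<chi> x = \<chi>' x"
        using \<eta>(1) x unfolding is_character_def by simp
    qed (use \<open>\<chi> \<in> E\<close> \<open>\<chi>' \<in> E\<close> in \<open>auto simp: E_def char_extensions_def\<close>)
  qed
  then have "twist ` E = E"
    by (rule endo_inj_surj[OF \<open>finite E\<close> twist_E])
  then have "(\<Sum>\<chi>\<in>E. \<chi> u) = (\<Sum>\<chi>\<in>twist ` E. \<chi> u)"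
    by simp
  also have "\<dots> = \<eta> u * (\<Sum>\<chi>\<in>E. \<chi> u)"
    using \<open>inj_on twist E\<close> by (simp add: sum.reindex twist_def sum_distrib_left)
  finally have "(1 - \<eta> u) * (\<Sum>\<chi>\<in>E. \<chi> u) = 0"
    by (simp add: algebra_simps)
  then show ?thesis
    using \<eta>(3) unfolding E_def by simp
qed

lemma sum_char_extensions:
  assumes "finite (carrier G)" "subgroup S G" "is_character (G\<lparr>carrier := S\<rparr>) \<phi>" "u \<in> carrier G"
  shows "(\<Sum>\<chi>\<in>char_extensions G S \<phi>. \<chi> u) = of_nat (order G) / of_nat (card S) * \<phi> u"
proof (cases "u \<in> S")
  case True
  have "card S > 0"
    using subgroup.finite_imp_card_positive[OF assms(2,1)] .
  moreover have "(\<Sum>\<chi>\<in>char_extensions G S \<phi>. \<chi> u) = of_nat (card (char_extensions G S \<phi>)) * \<phi> u"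
    using True unfolding char_extensions_def by simp
  ultimately show ?thesis
    using card_char_extensions[OF assms(1-3)]
    by (simp add: field_simps flip: of_nat_mult)
next
  case False
  then have "\<phi> u = 0"
    using assms(3) unfolding is_character_carrier_update by blast
  then show ?thesis
    using sum_char_extensions_notin[OF assms False] by simp
qed

end

section \<open>Pullbacks along split surjections\<close>

definition pullback :: "('g, 'm) monoid_scheme \<Rightarrow> ('g \<Rightarrow> 'k) \<Rightarrow> ('k \<Rightarrow> complex) \<Rightarrow> 'g \<Rightarrow> complex" where
  "pullback G \<pi> \<chi> a = (if a \<in> carrier G then \<chi> (\<pi> a) else 0)"

locale split_surjection = group_hom G K \<pi> for G (structure) and K (structure) and \<pi> +
  fixes \<sigma>
  assumes section_closed: "c \<in> carrier K \<Longrightarrow> \<sigma> c \<in> carrier G"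
    and section_inverse: "c \<in> carrier K \<Longrightarrow> \<pi> (\<sigma> c) = c"
begin

lemma kernel_component: "a \<in> carrier G \<Longrightarrow> inv (\<sigma> (\<pi> a)) \<otimes> a \<in> kernel G K \<pi>"
  by (simp add: kernel_def section_closed section_inverse)

lemma split_decompose:
  assumes "a \<in> carrier G"
  shows "\<sigma> (\<pi> a) \<otimes> (inv (\<sigma> (\<pi> a)) \<otimes> a) = a"
proof -
  have "\<sigma> (\<pi> a) \<in> carrier G"
    using assms by (simp add: section_closed)
  then show ?thesis
    using assms by (simp add: G.m_assoc[symmetric])
qed

lemma bij_betw_preimage_kernel:
  assumes "S \<subseteq> carrier K"
  shows "bij_betw (\<lambda>a. (\<pi> a, inv (\<sigma> (\<pi> a)) \<otimes> a)) {a \<in> carrier G. \<pi> a \<in> S} (S \<times> kernel G K \<pi>)"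
proof (rule bij_betw_byWitness[where f' = "\<lambda>(c, n). \<sigma> c \<otimes> n"])
  show "\<forall>a\<in>{a \<in> carrier G. \<pi> a \<in> S}. (\<lambda>(c, n). \<sigma> c \<otimes> n) (\<pi> a, inv (\<sigma> (\<pi> a)) \<otimes> a) = a"
    using split_decompose by auto
  show "\<forall>x\<in>S \<times> kernel G K \<pi>. (\<lambda>a. (\<pi> a, inv (\<sigma> (\<pi> a)) \<otimes> a)) ((\<lambda>(c, n). \<sigma> c \<otimes> n) x) = x"
  proof
    fix x assume "x \<in> S \<times> kernel G K \<pi>"
    then obtain c n where x: "x = (c, n)" and c: "c \<in> carrier K"
      and n: "n \<in> carrier G" "\<pi> n = \<one>\<^bsub>K\<^esub>"
      using assms unfolding kernel_def by auto
    then have "\<pi> (\<sigma> c \<otimes> n) = c"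
      by (simp add: section_closed section_inverse)
    then show "(\<lambda>a. (\<pi> a, inv (\<sigma> (\<pi> a)) \<otimes> a)) ((\<lambda>(c, n). \<sigma> c \<otimes> n) x) = x"
      using x c n section_closed[OF c] by (simp add: G.m_assoc[symmetric])
  qed
  show "(\<lambda>a. (\<pi> a, inv (\<sigma> (\<pi> a)) \<otimes> a)) ` {a \<in> carrier G. \<pi> a \<in> S} \<subseteq> S \<times> kernel G K \<pi>"
    using kernel_component by auto
  show "(\<lambda>(c, n). \<sigma> c \<otimes> n) ` (S \<times> kernel G K \<pi>) \<subseteq> {a \<in> carrier G. \<pi> a \<in> S}"
    using assms by (auto simp: kernel_def section_closed section_inverse)
qed

lemma card_preimage:
  "S \<subseteq> carrier K \<Longrightarrow> card {a \<in> carrier G. \<pi> a \<in> S} = card S * card (kernel G K \<pi>)"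
  using bij_betw_same_card[OF bij_betw_preimage_kernel] by (simp add: card_cartesian_product)

lemma character_factors:
  assumes \<nu>: "is_character G \<nu>" and trivial: "\<forall>n\<in>kernel G K \<pi>. \<nu> n = 1"
  defines "\<chi> \<equiv> \<lambda>c. if c \<in> carrier K then \<nu> (\<sigma> c) else 0"
  shows "is_character K \<chi>" and "\<nu> = pullback G \<pi> \<chi>"
proof -
  have \<nu>_mult: "\<nu> (x \<otimes> y) = \<nu> x * \<nu> y" if "x \<in> carrier G" "y \<in> carrier G" for x y
    using \<nu> that unfolding is_character_def by blast
  \<comment> \<open>\<open>a\<close> and \<open>\<sigma> (\<pi> a)\<close> differ by an element of the kernel, on which \<open>\<nu>\<close> is trivial\<close>
  have \<nu>_section: "\<nu> a = \<nu> (\<sigma> (\<pi> a))" if "a \<in> carrier G" for a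
  proof -
    have "\<nu> a = \<nu> (\<sigma> (\<pi> a)) * \<nu> (inv (\<sigma> (\<pi> a)) \<otimes> a)"
      using that \<nu>_mult[of "\<sigma> (\<pi> a)" "inv (\<sigma> (\<pi> a)) \<otimes> a"] split_decompose section_closed by simp
    then show ?thesis
      using trivial kernel_component[OF that] by simp
  qed
  show "is_character K \<chi>"
    unfolding is_character_def
  proof (intro conjI ballI allI impI)
    fix c assume "c \<in> carrier K"
    then show "\<chi> c \<noteq> 0"
      using \<nu> section_closed unfolding \<chi>_def is_character_def by simp
  next
    fix c d assume cd: "c \<in> carrier K" "d \<in> carrier K"
    then have "\<nu> (\<sigma> (c \<otimes>\<^bsub>K\<^esub> d)) = \<nu> (\<sigma> c \<otimes> \<sigma> d)"
      using \<nu>_section[of "\<sigma> c \<otimes> \<sigma> d"] section_closed by (simp add: section_inverse)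
    then show "\<chi> (c \<otimes>\<^bsub>K\<^esub> d) = \<chi> c * \<chi> d"
      using cd \<nu>_mult section_closed unfolding \<chi>_def by simp
  qed (simp add: \<chi>_def)
  show "\<nu> = pullback G \<pi> \<chi>"
  proof
    fix a
    show "\<nu> a = pullback G \<pi> \<chi> a"
      using \<nu>_section \<nu> unfolding pullback_def \<chi>_def is_character_def by auto
  qed
qed

theorem pullback_of_char_extension:
  assumes S: "subgroup S K" and \<phi>: "is_character (K\<lparr>carrier := S\<rparr>) \<phi>" and \<nu>: "is_character G \<nu>"
    and agree: "\<forall>a\<in>{a \<in> carrier G. \<pi> a \<in> S}. \<nu> a = pullback G \<pi> \<phi> a"
  shows "\<exists>\<chi>\<in>char_extensions K S \<phi>. \<nu> = pullback G \<pi> \<chi>"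
proof -
  define \<chi> where "\<chi> c = (if c \<in> carrier K then \<nu> (\<sigma> c) else 0)" for c
  have "\<phi> \<one>\<^bsub>K\<^esub> = 1"
    using group.character_one[OF subgroup.subgroup_is_group[OF S H.is_group] \<phi>] by simp
  then have "\<forall>n\<in>kernel G K \<pi>. \<nu> n = 1"
    using agree subgroup.one_closed[OF S] unfolding kernel_def pullback_def by auto
  then have \<chi>: "is_character K \<chi>" "\<nu> = pullback G \<pi> \<chi>"
    using character_factors[OF \<nu>] unfolding \<chi>_def by blast+
  have "\<chi> s = \<phi> s" if "s \<in> S" for s
  proof -
    have "s \<in> carrier K"
      using that subgroup.subset[OF S] by blast
    then show ?thesis
      using agree that section_closed section_inverse unfolding \<chi>_def pullback_def by simp
  qed
  then show ?thesis
    using \<chi> unfolding char_extensions_def by blast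
qed

theorem ind_char_pullback:
  assumes K: "comm_group K" and fin: "finite (carrier G)"
    and S: "subgroup S K" and \<phi>: "is_character (K\<lparr>carrier := S\<rparr>) \<phi>" and g: "g \<in> carrier G"
  shows "ind_char G {a \<in> carrier G. \<pi> a \<in> S} (pullback G \<pi> \<phi>) g
    = (\<Sum>\<chi>\<in>char_extensions K S \<phi>. pullback G \<pi> \<chi> g)"
proof -
  interpret K: comm_group K by (rule K)
  let ?N = "{a \<in> carrier G. \<pi> a \<in> S}"
  have conj: "\<pi> (x \<otimes> g \<otimes> inv x) = \<pi> g" if "x \<in> carrier G" for x
    using that g by (simp add: K.m_lcomm K.m_ac)
  have \<phi>_outside: "\<phi> c = 0" if "c \<notin> S" for c
    using \<phi> that unfolding is_character_carrier_update by blast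
  \<comment> \<open>every conjugate of \<open>g\<close> has the same image \<open>\<pi> g\<close>, since \<open>K\<close> is abelian\<close>
  have "(\<Sum>x\<in>carrier G. if x \<otimes> g \<otimes> inv x \<in> ?N then pullback G \<pi> \<phi> (x \<otimes> g \<otimes> inv x) else 0)
      = (\<Sum>x\<in>carrier G. \<phi> (\<pi> g))"
    using conj g \<phi>_outside by (intro sum.cong) (auto simp: pullback_def)
  then have ind: "ind_char G ?N (pullback G \<pi> \<phi>) g = of_nat (order G) / of_nat (card ?N) * \<phi> (\<pi> g)"
    unfolding ind_char_def order_def by simp
  have "carrier K = \<pi> ` carrier G"
    using section_closed section_inverse by force
  then have "finite (carrier K)"
    using fin by simp
  have "{a \<in> carrier G. \<pi> a \<in> carrier K} = carrier G"
    by auto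
  then have "order G = order K * card (kernel G K \<pi>)"
    using card_preimage[of "carrier K"] unfolding order_def by simp
  moreover have "card ?N = card S * card (kernel G K \<pi>)"
    using card_preimage subgroup.subset[OF S] by blast
  moreover have "card (kernel G K \<pi>) \<noteq> 0"
    using fin unfolding kernel_def by (subst card_0_eq) auto
  ultimately have "of_nat (order G) / of_nat (card ?N) = (of_nat (order K) / of_nat (card S) :: complex)"
    by simp
  then show ?thesis
    using ind K.sum_char_extensions[OF \<open>finite (carrier K)\<close> S \<phi>] g unfolding pullback_def by simp
qed

end

section \<open>The groups \<open>H'\<close> and \<open>U\<^sub>L\<^sup>1/U\<^sub>L\<^sup>h\<close>\<close>

lemma H'_grp_simps [simp]:
  "carrier (H'_grp h q) = H'_carrier h"
  "monoid.mult (H'_grp h q) = U_mult h q"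
  "one (H'_grp h q) = (\<lambda>_. 0)"
  by (simp_all add: H'_grp_def U_grp_def)

lemma UL_grp_simps [simp]:
  "carrier (UL_grp h) = UL_carrier h"
  "monoid.mult (UL_grp h) = UL_mult h"
  "one (UL_grp h) = (\<lambda>_. 0)"
  by (simp_all add: UL_grp_def)

lemma U_mult_eq_twisted_mult: "U_mult h q = twisted_mult (2 * (h - 1)) (\<lambda>i x. x ^ q ^ i)"
  unfolding U_mult_def twisted_mult_def by simp

lemma U_carrier_eq_trunc_seqs: "U_carrier h = trunc_seqs (2 * (h - 1))"
  unfolding U_carrier_def trunc_seqs_def by simp

lemma UL_mult_eq_twisted_mult: "1 \<le> h \<Longrightarrow> UL_mult h = twisted_mult (h - 1) (\<lambda>i x. x)"
  unfolding UL_mult_def twisted_mult_def by (intro ext) (auto simp: less_Suc_eq_le)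

lemma UL_carrier_eq_trunc_seqs: "1 \<le> h \<Longrightarrow> UL_carrier h = trunc_seqs (h - 1)"
  unfolding UL_carrier_def trunc_seqs_def by (auto simp: less_Suc_eq_le)

lemma comm_group_UL:
  assumes "1 \<le> h"
  shows "comm_group (UL_grp h :: (nat \<Rightarrow> 'a::{field,finite}) monoid)"
proof -
  have "UL_grp h = \<lparr>carrier = trunc_seqs (h - 1), monoid.mult = twisted_mult (h - 1) (\<lambda>i (x::'a). x),
      one = (\<lambda>_. 0)\<rparr>"
    unfolding UL_grp_def using assms by (simp add: UL_mult_eq_twisted_mult UL_carrier_eq_trunc_seqs)
  moreover have "group \<lparr>carrier = trunc_seqs (h - 1), monoid.mult = twisted_mult (h - 1) (\<lambda>i (x::'a). x),
      one = (\<lambda>_. 0)\<rparr>"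
    by (rule endo_family.group_twisted_mult[OF endo_family_id])
       (simp_all add: finite_trunc_seqs twisted_mult_trunc_seqs)
  ultimately show ?thesis
    by (metis group.group_comm_groupI partial_object.select_convs(1) monoid.select_convs(1)
        twisted_mult_id_commute)
qed

lemma H'_mult_closed:
  fixes a b :: "nat \<Rightarrow> 'a::field"
  assumes "0 < q" and a: "a \<in> H'_carrier h" and b: "b \<in> H'_carrier h"
  shows "U_mult h q a b \<in> H'_carrier h"
proof -
  have a_odd: "a i = 0" and b_odd: "b i = 0" if "odd i" "i \<le> h - 1" for i
    using a b that unfolding H'_carrier_def by auto
  \<comment> \<open>in an odd coefficient of the product, every term has an odd factor of index below \<open>h\<close>\<close>
  have "U_mult h q a b k = 0" if k: "odd k" "k \<le> h - 1" for k
  proof -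
    have "a i * b (k - i) ^ q ^ i = 0" if "i \<in> {1..<k}" for i
      using a_odd[of i] b_odd[of "k - i"] k that \<open>0 < q\<close> by (cases "odd i") auto
    then have "(\<Sum>i\<in>{1..<k}. a i * b (k - i) ^ q ^ i) = 0"
      by (intro sum.neutral) blast
    then show ?thesis
      unfolding U_mult_def using a_odd b_odd k by simp
  qed
  then show ?thesis
    unfolding H'_carrier_def U_carrier_def U_mult_def by auto
qed

lemma H'_carrier_trunc_seqs: "H'_carrier h \<subseteq> trunc_seqs (2 * (h - 1))"
  unfolding H'_carrier_def by (auto simp: U_carrier_eq_trunc_seqs)

lemma finite_H': "finite (H'_carrier h :: (nat \<Rightarrow> 'a::{field,finite}) set)"
  using H'_carrier_trunc_seqs finite_trunc_seqs by (rule finite_subset)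

lemma group_H':
  assumes "endo_family (\<lambda>i (x::'a::{field,finite}). x ^ q ^ i)" "0 < q"
  shows "group (H'_grp h q :: (nat \<Rightarrow> 'a) monoid)"
proof -
  have "group \<lparr>carrier = H'_carrier h,
      monoid.mult = twisted_mult (2 * (h - 1)) (\<lambda>i (x::'a). x ^ q ^ i), one = (\<lambda>_. 0)\<rparr>"
  proof (rule endo_family.group_twisted_mult[OF assms(1) H'_carrier_trunc_seqs finite_H'])
    show "(\<lambda>_. 0) \<in> (H'_carrier h :: (nat \<Rightarrow> 'a) set)"
      unfolding H'_carrier_def U_carrier_def by simp
  qed (use H'_mult_closed[OF assms(2)] in \<open>simp add: U_mult_eq_twisted_mult\<close>)
  then show ?thesis
    unfolding H'_grp_def U_grp_def by (simp add: U_mult_eq_twisted_mult)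
qed

definition even_part :: "nat \<Rightarrow> (nat \<Rightarrow> 'a::field) \<Rightarrow> nat \<Rightarrow> 'a" where
  "even_part h a = (\<lambda>j. if 1 \<le> j \<and> j \<le> h - 1 then a (2 * j) else 0)"

definition even_embed :: "(nat \<Rightarrow> 'a::field) \<Rightarrow> nat \<Rightarrow> 'a" where
  "even_embed c = (\<lambda>i. if even i then c (i div 2) else 0)"

text \<open>\<open>UL_top h\<close> is the subgroup \<open>U\<^sub>L\<^sup>h\<^sup>-\<^sup>1/U\<^sub>L\<^sup>h\<close> of \<open>U\<^sub>L\<^sup>1/U\<^sub>L\<^sup>h\<close>, and \<open>psi_top h \<psi>\<close> is \<open>1 + a \<pi>\<^sup>h\<^sup>-\<^sup>1 \<mapsto> \<psi> a\<close> on it.\<close>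
definition UL_top :: "nat \<Rightarrow> (nat \<Rightarrow> 'a::field) set" where
  "UL_top h = {c \<in> UL_carrier h. \<forall>i. i \<noteq> h - 1 \<longrightarrow> c i = 0}"

definition psi_top :: "nat \<Rightarrow> ('a::field \<Rightarrow> complex) \<Rightarrow> (nat \<Rightarrow> 'a) \<Rightarrow> complex" where
  "psi_top h \<psi> c = (if c \<in> UL_top h then \<psi> (c (h - 1)) else 0)"

lemma even_part_UL: "even_part h a \<in> UL_carrier h"
  unfolding even_part_def UL_carrier_def by auto

lemma even_part_mult:
  fixes a b :: "nat \<Rightarrow> 'a::field"
  assumes fermat: "\<And>x::'a. x ^ q ^ 2 = x" and "0 < q"
    and a: "a \<in> H'_carrier h" and b: "b \<in> H'_carrier h"
  shows "even_part h (U_mult h q a b) = UL_mult h (even_part h a) (even_part h b)"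
proof
  fix j
  have a_odd: "a i = 0" and b_odd: "b i = 0" if "odd i" "i \<le> h - 1" for i
    using a b that unfolding H'_carrier_def by auto
  have fermat_even: "x ^ q ^ (2 * l) = x" for x :: 'a and l
  proof -
    have "x ^ (q ^ 2) ^ l = x"
      by (induction l) (simp_all only: power_Suc power_mult fermat power_0 power_one_right)
    then show ?thesis
      by (simp only: power_mult)
  qed
  show "even_part h (U_mult h q a b) j = UL_mult h (even_part h a) (even_part h b) j"
  proof (cases "1 \<le> j \<and> j \<le> h - 1")
    case True
    let ?t = "\<lambda>i. a i * b (2 * j - i) ^ q ^ i"
    \<comment> \<open>only the even indices contribute, and on them the twist \<open>x \<mapsto> x ^ q ^ (2 * l)\<close> is trivial\<close>
    have "?t i = 0" if "i \<in> {1..<2 * j} - (\<lambda>l. 2 * l) ` {1..<j}" for i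
    proof -
      have "odd i" using that by (auto elim!: evenE)
      then show ?thesis
        using a_odd[of i] b_odd[of "2 * j - i"] that True \<open>0 < q\<close> by (cases "i \<le> h - 1") auto
    qed
    then have "(\<Sum>i\<in>{1..<2 * j}. ?t i) = (\<Sum>i\<in>(\<lambda>l. 2 * l) ` {1..<j}. ?t i)"
      by (intro sum.mono_neutral_right) auto
    also have "\<dots> = (\<Sum>l\<in>{1..<j}. ?t (2 * l))"
      by (subst sum.reindex) (auto simp: inj_on_def)
    also have "\<dots> = (\<Sum>l\<in>{1..<j}. even_part h a l * even_part h b (j - l))"
      using True by (intro sum.cong refl) (auto simp: even_part_def fermat_even simp flip: diff_mult_distrib2)
    finally show ?thesis
      using True unfolding even_part_def U_mult_def UL_mult_def by auto
  qed (auto simp: even_part_def UL_mult_def)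
qed

lemma even_part_hom:
  assumes "\<And>x::'a::{field,finite}. x ^ q ^ 2 = x" "0 < q"
  shows "even_part h \<in> hom (H'_grp h q) (UL_grp h :: (nat \<Rightarrow> 'a) monoid)"
  unfolding hom_def using even_part_mult[OF assms] even_part_UL by auto

lemma even_embed_H': "c \<in> UL_carrier h \<Longrightarrow> even_embed c \<in> H'_carrier h"
  unfolding H'_carrier_def U_carrier_def UL_carrier_def even_embed_def by (auto elim!: evenE)

lemma even_part_even_embed: "c \<in> UL_carrier h \<Longrightarrow> even_part h (even_embed c) = c"
  unfolding even_part_def even_embed_def UL_carrier_def by (auto simp: fun_eq_iff Suc_le_eq)

lemma H0'_carrier_eq:
  assumes "2 \<le> h"
  shows "H0'_carrier h = {a :: nat \<Rightarrow> 'a::field. a \<in> H'_carrier h \<and> even_part h a \<in> UL_top h}"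
proof (rule equalityI; rule subsetI)
  fix a :: "nat \<Rightarrow> 'a" assume "a \<in> H0'_carrier h"
  then show "a \<in> {a \<in> H'_carrier h. even_part h a \<in> UL_top h}"
    unfolding H0'_carrier_def H'_carrier_def UL_top_def even_part_def UL_carrier_def by fastforce
next
  fix a :: "nat \<Rightarrow> 'a" assume a: "a \<in> {a \<in> H'_carrier h. even_part h a \<in> UL_top h}"
  have "i = 2 * (h - 1) \<or> (odd i \<and> h - 1 < i)" if "a i \<noteq> 0" for i
  proof (cases "odd i")
    case False
    then obtain j where i: "i = 2 * j" by (auto elim: evenE)
    have "a 0 = 0" and a_high: "\<And>k. 2 * (h - 1) < k \<Longrightarrow> a k = 0"
      using a unfolding H'_carrier_def U_carrier_def by auto
    then have "j \<noteq> 0" "\<not> 2 * (h - 1) < 2 * j"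
      using that unfolding i by (metis mult_0_right, metis)
    then have "1 \<le> j" "j \<le> h - 1"
      by simp_all
    then have "even_part h a j = a i"
      unfolding even_part_def i by simp
    then have "j = h - 1"
      using a that unfolding UL_top_def by auto
    then show ?thesis
      using i by simp
  qed (use a that in \<open>auto simp: H'_carrier_def\<close>)
  then show "a \<in> H0'_carrier h"
    using a unfolding H0'_carrier_def H'_carrier_def by auto
qed

lemma psi_tilde_eq_pullback:
  assumes "2 \<le> h"
  shows "psi_tilde h \<psi> = pullback (H'_grp h q) (even_part h) (psi_top h \<psi>)"
proof
  fix a :: "nat \<Rightarrow> 'a"
  have "even_part h a (h - 1) = a (2 * (h - 1))"
    using assms unfolding even_part_def by simp
  then show "psi_tilde h \<psi> a = pullback (H'_grp h q) (even_part h) (psi_top h \<psi>) a"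
    unfolding psi_tilde_def pullback_def psi_top_def H0'_carrier_eq[OF assms] by auto
qed

lemma sharp_eq_pullback: "sharp h \<chi> = pullback (H'_grp h q) (even_part h) \<chi>"
  unfolding sharp_def pullback_def even_part_def by simp

lemma UL_top_mult:
  assumes "2 \<le> h" "c \<in> UL_top h" "d \<in> UL_top h"
  shows "UL_mult h c d \<in> UL_top h" and "UL_mult h c d (h - 1) = c (h - 1) + d (h - 1)"
proof -
  have "c i * d (k - i) = 0" if "i \<in> {1..<k}" "k \<le> h - 1" for i k
    using assms(2,3) that unfolding UL_top_def by auto
  then have no_cross: "(\<Sum>i\<in>{1..<k}. c i * d (k - i)) = 0" if "k \<le> h - 1" for k
    using that by (intro sum.neutral) blast
  show "UL_mult h c d (h - 1) = c (h - 1) + d (h - 1)"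
    using no_cross[of "h - 1"] assms(1) unfolding UL_mult_def by simp
  show "UL_mult h c d \<in> UL_top h"
    using no_cross assms(2,3) unfolding UL_top_def UL_carrier_def UL_mult_def by (auto simp: less_Suc_eq_le)
qed

lemma UL_top_subgroup:
  assumes "2 \<le> h"
  shows "subgroup (UL_top h) (UL_grp h :: (nat \<Rightarrow> 'a::{field,finite}) monoid)"
proof -
  interpret UL: comm_group "UL_grp h :: (nat \<Rightarrow> 'a) monoid"
    using assms by (intro comm_group_UL) simp
  have "UL_top h \<subseteq> (UL_carrier h :: (nat \<Rightarrow> 'a) set)"
    unfolding UL_top_def by auto
  moreover have "finite (UL_carrier h :: (nat \<Rightarrow> 'a) set)"
    using assms by (simp add: UL_carrier_eq_trunc_seqs finite_trunc_seqs)
  moreover have "(\<lambda>_. 0) \<in> (UL_top h :: (nat \<Rightarrow> 'a) set)"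
    unfolding UL_top_def UL_carrier_def by simp
  ultimately show ?thesis
    using UL_top_mult(1)[OF assms] finite_subset by (intro UL.finite_subgroupI) auto
qed

lemma psi_top_character:
  fixes \<psi> :: "'a::field \<Rightarrow> complex"
  assumes "2 \<le> h" "additive_character \<psi>"
  shows "is_character ((UL_grp h)\<lparr>carrier := UL_top h\<rparr>) (psi_top h \<psi>)"
  unfolding is_character_carrier_update
proof (intro conjI ballI allI impI)
  fix c d :: "nat \<Rightarrow> 'a" assume cd: "c \<in> UL_top h" "d \<in> UL_top h"
  then show "psi_top h \<psi> (c \<otimes>\<^bsub>UL_grp h\<^esub> d) = psi_top h \<psi> c * psi_top h \<psi> d"
    using assms(2) UL_top_mult[OF assms(1) cd] unfolding psi_top_def additive_character_def by simp
qed (use assms(2) in \<open>auto simp: psi_top_def additive_character_def\<close>)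

lemma A_psi_eq:
  assumes "2 \<le> h"
  shows "A_psi h \<psi> = char_extensions (UL_grp h) (UL_top h) (psi_top h \<psi>)"
proof -
  let ?single = "\<lambda>(a::'a) i. if i = h - 1 then a else 0"
  have single: "?single a \<in> UL_top h" for a
    using assms unfolding UL_top_def UL_carrier_def by auto
  have rep: "?single (c (h - 1)) = c" if "c \<in> UL_top h" for c
    using that unfolding UL_top_def by auto
  have "(\<forall>a. \<chi> (?single a) = \<psi> a) \<longleftrightarrow> (\<forall>c\<in>UL_top h. \<chi> c = psi_top h \<psi> c)"
    for \<chi> :: "(nat \<Rightarrow> 'a) \<Rightarrow> complex"
  proof
    assume "\<forall>a. \<chi> (?single a) = \<psi> a"
    then have "\<chi> c = psi_top h \<psi> c" if "c \<in> UL_top h" for c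
      using that unfolding psi_top_def by (metis rep)
    then show "\<forall>c\<in>UL_top h. \<chi> c = psi_top h \<psi> c" ..
  next
    assume "\<forall>c\<in>UL_top h. \<chi> c = psi_top h \<psi> c"
    then show "\<forall>a. \<chi> (?single a) = \<psi> a"
      using single unfolding psi_top_def by simp
  qed
  then show ?thesis
    unfolding A_psi_def char_extensions_def by simp
qed

lemma split_surjection_even_part:
  assumes "q = CHAR('a::{field,finite}) ^ r" "card (UNIV :: 'a set) = q ^ 2" "1 \<le> h"
  shows "split_surjection (H'_grp h q) (UL_grp h :: (nat \<Rightarrow> 'a) monoid) (even_part h) even_embed"
proof (intro split_surjection.intro group_hom.intro group_hom_axioms.intro split_surjection_axioms.intro)
  have "0 < q"
    using assms(1) by (simp add: finite_imp_CHAR_pos)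
  have "x ^ q ^ 2 = x" for x :: 'a
    using field_power_card_eq_self[of x] assms(2) by simp
  then show "even_part h \<in> hom (H'_grp h q) (UL_grp h :: (nat \<Rightarrow> 'a) monoid)"
    using \<open>0 < q\<close> by (rule even_part_hom)
  show "group (H'_grp h q :: (nat \<Rightarrow> 'a) monoid)"
    using endo_family_frobenius[OF assms(1)] \<open>0 < q\<close> by (rule group_H')
  show "group (UL_grp h :: (nat \<Rightarrow> 'a) monoid)"
    using comm_group_UL[OF assms(3)] by (rule comm_group.axioms(2))
qed (simp_all add: even_embed_H' even_part_even_embed)

theorem lemma2p6:
  fixes p q r h :: nat and \<psi> :: "'a::{field,finite} \<Rightarrow> complex"
  assumes "prime p" and "r \<ge> 1" and "q = p ^ r" and "card (UNIV :: 'a set) = q ^ 2"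
    and "h \<ge> 3" and "odd h"
    and "additive_character \<psi>" and "has_conductor_q2 q \<psi>"
  shows "(\<forall>\<nu>. is_character (H'_grp h q) \<nu> \<and> (\<forall>a\<in>H0'_carrier h. \<nu> a = psi_tilde h \<psi> a)
             \<longrightarrow> (\<exists>\<chi>\<in>A_psi h \<psi>. \<nu> = sharp h \<chi>))
       \<and> (\<forall>g\<in>H'_carrier h. ind_char (H'_grp h q) (H0'_carrier h) (psi_tilde h \<psi>) g
             = (\<Sum>\<chi>\<in>A_psi h \<psi>. sharp h \<chi> g))"
proof -
  have h: "2 \<le> h" using \<open>h \<ge> 3\<close> by simp
  have "CHAR('a) = p"
    using assms(1,4) unfolding assms(3)
    by (intro CHAR_eq_prime_of_card[where n = "r * 2"]) (simp_all add: power_mult)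
  then interpret split_surjection "H'_grp h q" "UL_grp h :: (nat \<Rightarrow> 'a) monoid" "even_part h" even_embed
    using assms(3,4) h by (intro split_surjection_even_part[where r = r]) simp_all
  have UL: "comm_group (UL_grp h :: (nat \<Rightarrow> 'a) monoid)"
    using h by (intro comm_group_UL) simp
  have finite: "finite (carrier (H'_grp h q) :: (nat \<Rightarrow> 'a) set)"
    using finite_H' by simp
  note S = UL_top_subgroup[OF h] and \<phi> = psi_top_character[OF h assms(7)]
  show ?thesis
    unfolding A_psi_eq[OF h] psi_tilde_eq_pullback[OF h, where q = q] sharp_eq_pullback[where q = q]
      H0'_carrier_eq[OF h]
    using pullback_of_char_extension[OF S \<phi>] ind_char_pullback[OF UL finite S \<phi>] by auto
qed

end
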